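(* Let $\mathcal Y\subset\mathbb R^d$ be a finite set such that no element of $\mathcal Y$ is a strict convex combination of other elements of $\mathcal Y$. Let $\varepsilon>0$ and let $\mathbf Z$ be a standard multivariate normal random vector on $\mathbb R^d$. For $s_1,s_2\in V_\Delta$ with $s_1\neq s_2$, define $f_k(y;Z)=s_k(y)+\varepsilon Z^\top y$ for $k=1,2$. Then $$\mathbb P_{\mathbf Z}\Big(\operatorname*{argmax}_{y\in\mathcal Y}f_1(y;\mathbf Z)\cap\operatorname*{argmax}_{y\in\mathcal Y}f_2(y;\mathbf Z)=\emptyset\Big)>0.$$
   Context: $\mathbb R^{\mathcal Y}$ is the space of vectors $s$ indexed by $\mathcal Y$ with components $s(y)$, and $V_\Delta=\{s\in\mathbb R^{\mathcal Y}:\sum_{y\in\mathcal Y}s(y)=0\}$ (the direction of the affine hull of the probability simplex $\Delta^{\mathcal Y}$). *)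

theory Defs
  imports "HOL-Probability.Probability"
begin

text \<open>Vectors of R^d are modelled as functions "d => real" with a finite index type d
  (so d = CARD('d) \<ge> 1).\<close>

definition inner_fun :: "('d::finite \<Rightarrow> real) \<Rightarrow> ('d \<Rightarrow> real) \<Rightarrow> real" where
  "inner_fun z y = (\<Sum>i\<in>UNIV. z i * y i)"

definition strict_convex_comb_of_others :: "('d::finite \<Rightarrow> real) set \<Rightarrow> ('d \<Rightarrow> real) \<Rightarrow> bool" where
  "strict_convex_comb_of_others Y y \<longleftrightarrow>
     (\<exists>S u. finite S \<and> S \<noteq> {} \<and> S \<subseteq> Y - {y} \<and> (\<forall>x\<in>S. u x > (0::real)) \<and>
            sum u S = 1 \<and> (\<lambda>i. \<Sum>x\<in>S. u x * x i) = y)"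

definition V_Delta :: "'y set \<Rightarrow> ('y \<Rightarrow> real) set" where
  "V_Delta Y = {s. s \<in> extensional Y \<and> sum s Y = 0}"

definition argmax_set :: "'y set \<Rightarrow> ('y \<Rightarrow> real) \<Rightarrow> 'y set" where
  "argmax_set Y f = {y\<in>Y. \<forall>y'\<in>Y. f y' \<le> f y}"

definition std_normal_vec :: "('d::finite \<Rightarrow> real) measure" where
  "std_normal_vec = PiM UNIV (\<lambda>_. density lborel std_normal_density)"

end

theory Submission
  imports Defs
begin

(* If the two argmax sets met for every z, then D z = max f1(.;z) - max f2(.;z) would be a
  continuous function of z with values in the finite set {s1 y - s2 y | y in Y}, hence constant.
  Every y in Y lies outside the convex hull of the other points, so it is the unique maximiser of
  z . y for some direction z; for a large multiple of that direction y maximises both f1 and f2,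
  which gives D = s1 y - s2 y. Thus s1 - s2 is constant on Y, and since both sum to zero, s1 = s2.
  Hence for s1 ~= s2 the argmax sets are disjoint at some z0; disjointness is an open condition
  in z, and the Gaussian measure charges every nonempty open set. *)

lemma emeasure_std_normal_density_open_pos:
  fixes A :: "real set"
  assumes "open A" and "x \<in> A"
  shows "0 < emeasure (density lborel std_normal_density) A"
proof -
  obtain e where e: "e > 0" "ball x e \<subseteq> A" using assms by (rule openE)
  have "{x - e<..<x + e} \<subseteq> A"
    using e(2) by (auto simp: ball_def dist_real_def abs_diff_less_iff)
  moreover have "{x - e<..<x + e} \<notin> null_sets lborel" using e(1) by (simp add: null_sets_def)
  ultimately have "A \<notin> null_sets lborel" using assms(1) null_sets_subset[of A lborel] by auto
  moreover have "AE y in lborel. y \<notin> A"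
    if "AE y in lborel. y \<in> A \<longrightarrow> std_normal_density y = 0"
    using that by eventually_elim (metis normal_density_pos less_irrefl zero_less_one)
  ultimately have "A \<notin> null_sets (density lborel std_normal_density)"
    using assms(1) by (subst null_sets_density_iff) (auto simp: AE_iff_null_sets)
  thus ?thesis using assms(1) by (simp add: zero_less_iff_neq_zero null_sets_def)
qed

lemma space_std_normal_vec [simp]: "space std_normal_vec = UNIV"
  unfolding std_normal_vec_def by (simp add: space_PiM)

lemma sets_std_normal_vec: "sets (std_normal_vec :: ('d::finite \<Rightarrow> real) measure) = sets borel"
proof -
  have "sets std_normal_vec = sets (PiM UNIV (\<lambda>_::'d. borel :: real measure))"
    unfolding std_normal_vec_def by (intro sets_PiM_cong) auto
  also have "\<dots> = sets borel" by (rule sets_PiM_equal_borel)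
  finally show ?thesis .
qed

lemma prob_space_std_normal_vec: "prob_space std_normal_vec"
  unfolding std_normal_vec_def by (intro prob_space_PiM) (simp add: prob_space_normal_density)

lemma measure_std_normal_vec_open_pos:
  fixes U :: "('d::finite \<Rightarrow> real) set"
  assumes "open U" and "z \<in> U"
  shows "0 < measure std_normal_vec U"
proof -
  interpret N: prob_space std_normal_vec by (rule prob_space_std_normal_vec)
  obtain X where X: "z \<in> PiE UNIV X" "\<And>i. open (X i)" "PiE UNIV X \<subseteq> U"
    using product_topology_open_contains_basis[of "\<lambda>_. euclidean" UNIV U z] assms
    unfolding open_fun_def by auto
  have "emeasure std_normal_vec (PiE UNIV X) =
      (\<Prod>i\<in>UNIV. emeasure (density lborel std_normal_density) (X i))"
    unfolding std_normal_vec_def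
    by (intro product_sigma_finite.emeasure_PiM)
       (auto simp: product_sigma_finite_def prob_space_imp_sigma_finite
         prob_space_normal_density X(2))
  also have "\<dots> > 0"
    using X(1,2) emeasure_std_normal_density_open_pos
    by (auto simp: zero_less_iff_neq_zero prod_zero_iff)
  also have "emeasure std_normal_vec (PiE UNIV X) \<le> emeasure std_normal_vec U"
    using X(3) assms(1) by (intro emeasure_mono) (auto simp: sets_std_normal_vec)
  finally show ?thesis by (simp add: N.emeasure_eq_measure)
qed

(* The separating hyperplane theorem needs a Euclidean space, so points of Y are moved to
  real^'d by vec_lambda. *)

lemma strict_convex_comb_of_othersI:
  fixes Y :: "('d::finite \<Rightarrow> real) set"
  assumes "finite Y" and "vec_lambda y0 \<in> convex hull (vec_lambda ` (Y - {y0}))"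
  shows "strict_convex_comb_of_others Y y0"
proof -
  have inj: "inj_on vec_lambda (Y - {y0})" by (rule inj_onI) (metis vec_lambda_inverse UNIV_I)
  obtain u where u: "\<forall>x\<in>Y - {y0}. 0 \<le> u x" "sum u (Y - {y0}) = 1"
      "(\<Sum>x\<in>Y - {y0}. u x *\<^sub>R vec_lambda x) = vec_lambda y0"
    using assms convex_hull_finite[of "vec_lambda ` (Y - {y0})"]
    by (auto simp: sum.reindex[OF inj] comp_def)
  define S where "S = {x \<in> Y - {y0}. 0 < u x}"
  have S: "S \<subseteq> Y - {y0}" "finite S" using assms(1) by (auto simp: S_def)
  have zero: "\<forall>x\<in>Y - {y0} - S. u x = 0" using u(1) by (force simp: S_def)
  have sum1: "sum u S = 1"
    using u(2) sum.mono_neutral_left[OF _ S(1) zero] assms(1) by simp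
  moreover have "(\<Sum>x\<in>S. u x *\<^sub>R vec_lambda x) = vec_lambda y0"
    using u(3) sum.mono_neutral_left[OF _ S(1), of "\<lambda>x. u x *\<^sub>R vec_lambda x"] zero assms(1)
    by simp
  hence "(\<lambda>i. \<Sum>x\<in>S. u x * x i) = y0"
    by (drule_tac arg_cong[where f = vec_nth]) (simp add: fun_eq_iff sum_component)
  moreover have "S \<noteq> {}" using sum1 by auto
  ultimately show ?thesis
    unfolding strict_convex_comb_of_others_def using S sum1
    by (intro exI[of _ S] exI[of _ u]) (auto simp: S_def)
qed

lemma exposing_direction_exists:
  fixes Y :: "('d::finite \<Rightarrow> real) set"
  assumes "finite Y" and "\<not> strict_convex_comb_of_others Y y0"
  shows "\<exists>w. \<forall>y\<in>Y - {y0}. inner_fun w y < inner_fun w y0"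
proof -
  define S where "S = convex hull (vec_lambda ` (Y - {y0}))"
  have "convex S" by (simp add: S_def)
  moreover have "closed S"
    unfolding S_def using assms(1)
    by (simp add: compact_imp_closed compact_convex_hull finite_imp_compact)
  moreover have "vec_lambda y0 \<notin> S"
    using strict_convex_comb_of_othersI assms unfolding S_def by blast
  ultimately obtain a b where ab: "inner a (vec_lambda y0) < b" "\<forall>x\<in>S. b < inner a x"
    using separating_hyperplane_closed_point by blast
  have "inner_fun (\<lambda>i. - a $ i) y < inner_fun (\<lambda>i. - a $ i) y0" if "y \<in> Y - {y0}" for y
  proof -
    have "b < inner a (vec_lambda y)" using ab(2) that by (simp add: S_def hull_inc)
    moreover have "inner_fun (\<lambda>i. - a $ i) x = - inner a (vec_lambda x)" for x :: "'d \<Rightarrow> real"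
      by (simp add: inner_fun_def inner_vec_def sum_negf)
    ultimately show ?thesis using ab(1) by simp
  qed
  thus ?thesis by blast
qed

lemma not_in_argmax_set_iff: "y \<in> Y \<Longrightarrow> y \<notin> argmax_set Y f \<longleftrightarrow> (\<exists>y'\<in>Y. f y < f y')"
  by (auto simp: argmax_set_def not_le)

lemma Max_image_eq_if_in_argmax_set: "finite Y \<Longrightarrow> y \<in> argmax_set Y f \<Longrightarrow> Max (f ` Y) = f y"
  unfolding argmax_set_def by (intro Max_eqI) auto

lemma eventually_in_argmax_set_at_top:
  fixes h :: "'y \<Rightarrow> real"
  assumes "finite Y" and "y0 \<in> Y" and "\<forall>y\<in>Y - {y0}. h y < h y0"
  shows "eventually (\<lambda>t. y0 \<in> argmax_set Y (\<lambda>y. s y + t * h y)) at_top"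
proof -
  have "eventually (\<lambda>t. s y + t * h y \<le> s y0 + t * h y0) at_top" if "y \<in> Y" for y
  proof (cases "y = y0")
    case False
    with assms(3) that have gap: "0 < h y0 - h y" by simp
    show ?thesis unfolding eventually_at_top_linorder
    proof (intro exI allI impI)
      fix t assume "(s y - s y0) / (h y0 - h y) \<le> t"
      hence "s y - s y0 \<le> t * (h y0 - h y)" using gap by (simp add: pos_divide_le_eq)
      thus "s y + t * h y \<le> s y0 + t * h y0" by (simp add: algebra_simps)
    qed
  qed simp
  hence "eventually (\<lambda>t. \<forall>y\<in>Y. s y + t * h y \<le> s y0 + t * h y0) at_top"
    using assms(1) by (simp add: eventually_ball_finite)
  thus ?thesis using assms(2) unfolding argmax_set_def by (auto elim: eventually_mono)
qed

lemma open_argmax_sets_disjoint: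
  fixes f g :: "'a::topological_space \<Rightarrow> 'y \<Rightarrow> real"
  assumes "finite Y"
    and "\<forall>y\<in>Y. continuous_on UNIV (\<lambda>z. f z y)" and "\<forall>y\<in>Y. continuous_on UNIV (\<lambda>z. g z y)"
  shows "open {z. argmax_set Y (f z) \<inter> argmax_set Y (g z) = {}}"
proof -
  have "{z. argmax_set Y (f z) \<inter> argmax_set Y (g z) = {}} =
      (\<Inter>y\<in>Y. \<Union>y'\<in>Y. {z. f z y < f z y'} \<union> {z. g z y < g z y'})"
  proof -
    have "argmax_set Y (f z) \<inter> argmax_set Y (g z) = {} \<longleftrightarrow>
        (\<forall>y\<in>Y. y \<notin> argmax_set Y (f z) \<or> y \<notin> argmax_set Y (g z))" for z
      by (auto simp: argmax_set_def)
    thus ?thesis by (auto simp: not_in_argmax_set_iff)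
  qed
  thus ?thesis using assms by (auto intro!: open_INT open_UN open_Un open_Collect_less)
qed

lemma continuous_on_Max_image:
  fixes F :: "'y \<Rightarrow> 'a::topological_space \<Rightarrow> 'b::linorder_topology"
  assumes "finite Y" and "Y \<noteq> {}" and "\<forall>y\<in>Y. continuous_on S (F y)"
  shows "continuous_on S (\<lambda>x. Max ((\<lambda>y. F y x) ` Y))"
  using assms
proof (induction Y rule: finite_ne_induct)
  case (insert y Y)
  thus ?case by (simp add: Max_insert continuous_on_max)
qed simp

lemma connected_UNIV_fun: "connected (UNIV :: ('i \<Rightarrow> real) set)"
proof -
  have "UNIV = (\<Union>z. (\<lambda>t i. t * z i) ` UNIV :: ('i \<Rightarrow> real) set)"
    by (force intro: image_eqI[where x = 1])
  moreover have "connected ((\<lambda>t i. t * z i) ` UNIV)" for z :: "'i \<Rightarrow> real"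
    by (intro connected_continuous_image connected_UNIV continuous_intros)
  moreover have "(\<lambda>_. 0) \<in> (\<lambda>t i. t * z i) ` UNIV" for z :: "'i \<Rightarrow> real"
    by (force intro: image_eqI[where x = 0])
  ultimately show ?thesis by (metis (no_types, lifting) connected_Union INT_I empty_iff imageE)
qed

lemma inner_fun_mult_left: "inner_fun (\<lambda>i. t * w i) y = t * inner_fun w y"
  unfolding inner_fun_def by (simp add: sum_distrib_left mult.assoc)

lemma continuous_on_inner_fun: "continuous_on UNIV (\<lambda>z. inner_fun z y)"
  unfolding inner_fun_def by (intro continuous_intros continuous_on_product_coordinates)

lemma V_Delta_eqI:
  assumes "s1 \<in> V_Delta Y" and "s2 \<in> V_Delta Y" and "finite Y"
    and "\<And>a b. a \<in> Y \<Longrightarrow> b \<in> Y \<Longrightarrow> s1 a - s2 a = s1 b - s2 b"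
  shows "s1 = s2"
proof
  fix x
  show "s1 x = s2 x"
  proof (cases "x \<in> Y")
    case True
    have "0 = (\<Sum>a\<in>Y. s1 a - s2 a)"
      using assms(1,2) by (simp add: V_Delta_def sum_subtractf)
    also have "\<dots> = real (card Y) * (s1 x - s2 x)"
      using assms(4)[OF _ True] by simp
    finally show ?thesis using True assms(3) by auto
  next
    case False
    thus ?thesis using assms(1,2) by (simp add: V_Delta_def extensional_def)
  qed
qed

lemma diff_const_if_argmax_sets_meet:
  fixes g :: "'a::topological_space \<Rightarrow> 'y \<Rightarrow> real" and Y :: "'y set"
  defines "A s z \<equiv> argmax_set Y (\<lambda>y. s y + g z y)"
  assumes "connected (UNIV :: 'a set)" and "finite Y"
    and "\<forall>y\<in>Y. continuous_on UNIV (\<lambda>z. g z y)"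
    and meet: "\<forall>z. A s1 z \<inter> A s2 z \<noteq> {}"
    and "a \<in> A s1 za \<inter> A s2 za" and "b \<in> A s1 zb \<inter> A s2 zb"
  shows "s1 a - s2 a = s1 b - s2 b"
proof -
  define D where "D z = Max ((\<lambda>y. s1 y + g z y) ` Y) - Max ((\<lambda>y. s2 y + g z y) ` Y)" for z
  have D_eq: "D z = s1 y - s2 y" if "y \<in> A s1 z \<inter> A s2 z" for y z
    using that Max_image_eq_if_in_argmax_set[OF assms(3), of y "\<lambda>y. s1 y + g z y"]
      Max_image_eq_if_in_argmax_set[OF assms(3), of y "\<lambda>y. s2 y + g z y"]
    by (simp add: D_def A_def)
  have "Y \<noteq> {}" using assms(6) by (auto simp: A_def argmax_set_def)
  hence "continuous_on UNIV D"
    unfolding D_def using assms(3,4)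
    by (intro continuous_on_diff continuous_on_Max_image) (auto intro!: continuous_intros)
  moreover have "D ` UNIV \<subseteq> (\<lambda>y. s1 y - s2 y) ` Y"
  proof
    fix d assume "d \<in> D ` UNIV"
    then obtain z where "d = D z" by blast
    moreover obtain y where "y \<in> A s1 z \<inter> A s2 z" using meet by blast
    moreover have "y \<in> Y" using calculation(2) by (simp add: A_def argmax_set_def)
    ultimately show "d \<in> (\<lambda>y. s1 y - s2 y) ` Y" using D_eq by blast
  qed
  hence "finite (D ` UNIV)" using assms(3) finite_subset by blast
  ultimately have "D constant_on UNIV"
    by (rule continuous_finite_range_constant[OF assms(2)])
  hence "D za = D zb" unfolding constant_on_def by (metis UNIV_I)
  thus ?thesis using D_eq[OF assms(6)] D_eq[OF assms(7)] by simp
qed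

lemma argmax_sets_disjoint_somewhere:
  fixes Y :: "('d::finite \<Rightarrow> real) set" and \<epsilon> :: real
  defines "A s z \<equiv> argmax_set Y (\<lambda>y. s y + \<epsilon> * inner_fun z y)"
  assumes "finite Y" and "\<forall>y\<in>Y. \<not> strict_convex_comb_of_others Y y" and "\<epsilon> > 0"
    and "s1 \<in> V_Delta Y" and "s2 \<in> V_Delta Y" and "s1 \<noteq> s2"
  shows "\<exists>z. A s1 z \<inter> A s2 z = {}"
proof (rule ccontr)
  assume "\<nexists>z. A s1 z \<inter> A s2 z = {}"
  hence meet: "\<forall>z. A s1 z \<inter> A s2 z \<noteq> {}" by blast
  have common: "\<exists>z. a \<in> A s1 z \<inter> A s2 z" if a: "a \<in> Y" for a
  proof -
    obtain w where w: "\<forall>y\<in>Y - {a}. inner_fun w y < inner_fun w a"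
      using exposing_direction_exists[OF assms(2) assms(3)[rule_format, OF a]] by blast
    have "eventually (\<lambda>t. a \<in> argmax_set Y (\<lambda>y. s1 y + t * inner_fun w y) \<and>
        a \<in> argmax_set Y (\<lambda>y. s2 y + t * inner_fun w y)) at_top"
      by (intro eventually_conj eventually_in_argmax_set_at_top[OF assms(2) a w])
    then obtain t where "a \<in> argmax_set Y (\<lambda>y. s1 y + t * inner_fun w y) \<and>
        a \<in> argmax_set Y (\<lambda>y. s2 y + t * inner_fun w y)"
      by (auto simp: eventually_at_top_linorder)
    moreover have "\<epsilon> * inner_fun (\<lambda>i. t / \<epsilon> * w i) y = t * inner_fun w y" for y
      using assms(4) by (simp only: inner_fun_mult_left) simp
    ultimately have "a \<in> A s1 (\<lambda>i. t / \<epsilon> * w i) \<inter> A s2 (\<lambda>i. t / \<epsilon> * w i)"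
      by (simp add: A_def)
    thus ?thesis by blast
  qed
  have "s1 = s2"
  proof (rule V_Delta_eqI[OF assms(5,6,2)])
    fix a b assume "a \<in> Y" "b \<in> Y"
    then obtain za zb where "a \<in> A s1 za \<inter> A s2 za" "b \<in> A s1 zb \<inter> A s2 zb"
      using common by blast
    moreover have "\<forall>y\<in>Y. continuous_on UNIV (\<lambda>z. \<epsilon> * inner_fun z y)"
      by (auto intro: continuous_on_mult_left continuous_on_inner_fun)
    ultimately show "s1 a - s2 a = s1 b - s2 b"
      using diff_const_if_argmax_sets_meet[where g = "\<lambda>z y. \<epsilon> * inner_fun z y",
          OF connected_UNIV_fun assms(2)] meet
      unfolding A_def by blast
  qed
  thus False using assms(7) by contradiction
qed

theorem lemma2:
  fixes Y :: "('d::finite \<Rightarrow> real) set"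
    and \<epsilon> :: real
    and s1 s2 :: "('d \<Rightarrow> real) \<Rightarrow> real"
  assumes "finite Y"
    and "\<forall>y\<in>Y. \<not> strict_convex_comb_of_others Y y"
    and "\<epsilon> > 0"
    and "s1 \<in> V_Delta Y" and "s2 \<in> V_Delta Y" and "s1 \<noteq> s2"
  shows "measure std_normal_vec
           {z \<in> space std_normal_vec.
              argmax_set Y (\<lambda>y. s1 y + \<epsilon> * inner_fun z y)
              \<inter> argmax_set Y (\<lambda>y. s2 y + \<epsilon> * inner_fun z y) = {}} > 0"
proof -
  obtain z0 where "argmax_set Y (\<lambda>y. s1 y + \<epsilon> * inner_fun z0 y)
      \<inter> argmax_set Y (\<lambda>y. s2 y + \<epsilon> * inner_fun z0 y) = {}"
    using argmax_sets_disjoint_somewhere[OF assms] by blast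
  moreover have "open {z. argmax_set Y (\<lambda>y. s1 y + \<epsilon> * inner_fun z y)
      \<inter> argmax_set Y (\<lambda>y. s2 y + \<epsilon> * inner_fun z y) = {}}"
    using assms(1) continuous_on_inner_fun
    by (intro open_argmax_sets_disjoint) (auto intro!: continuous_intros)
  ultimately show ?thesis using measure_std_normal_vec_open_pos[of _ z0] by simp
qed

end
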